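(* Let $G$ be a graph and $k \ge 0$ an integer. Then $G$ has a 2-coloring of cost at most $k$ if and only if there exists a set $S \subseteq E(G)$ of at most $k$ edges such that $G/S$ is bipartite.
   Context: All graphs are finite, simple and undirected. A 2-coloring of $G$ is any function $\phi: V(G)\to\{1,2\}$ (not necessarily proper). A monochromatic component of $\phi$ is a vertex set $X$ such that $G[X]$ is a connected component of $G[\phi^{-1}(1)]$ or of $G[\phi^{-1}(2)]$. The cost of $\phi$ is $\sum_{X} (|X|-1)$, the sum over all monochromatic components $X$ of $\phi$. Contracting an edge $xy$ deletes $x$ and $y$ and replaces them by a new vertex adjacent to exactly the vertices adjacent to at least one of $x,y$. For $S\subseteq E(G)$, $G/S$ is the graph obtained by repeatedly contracting an edge of $S$ until none remains; equivalently, by contracting all edges of a spanning forest of $(V(G),S)$. *)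

theory Defs
  imports Main
begin

definition graph :: "'a set \<Rightarrow> 'a set set \<Rightarrow> bool" where
  "graph V E \<longleftrightarrow> finite V \<and> (\<forall>e\<in>E. \<exists>x y. x \<noteq> y \<and> e = {x, y} \<and> x \<in> V \<and> y \<in> V)"

definition adj_in :: "'a set set \<Rightarrow> 'a set \<Rightarrow> ('a \<times> 'a) set" where
  "adj_in F W = {(x, y). {x, y} \<in> F \<and> x \<in> W \<and> y \<in> W}"

definition components :: "'a set set \<Rightarrow> 'a set \<Rightarrow> 'a set set" where
  "components F W = (\<lambda>x. {y. (x, y) \<in> (adj_in F W)\<^sup>*}) ` W"

text \<open>2-coloring: any function into {1,2} on V (not necessarily proper).\<close>
definition two_coloring :: "'a set \<Rightarrow> ('a \<Rightarrow> nat) \<Rightarrow> bool" where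
  "two_coloring V \<phi> \<longleftrightarrow> \<phi> ` V \<subseteq> {1, 2}"

definition mono_components :: "'a set \<Rightarrow> 'a set set \<Rightarrow> ('a \<Rightarrow> nat) \<Rightarrow> 'a set set" where
  "mono_components V E \<phi> =
     components E {v \<in> V. \<phi> v = 1} \<union> components E {v \<in> V. \<phi> v = 2}"

definition cost :: "'a set \<Rightarrow> 'a set set \<Rightarrow> ('a \<Rightarrow> nat) \<Rightarrow> nat" where
  "cost V E \<phi> = (\<Sum>X\<in>mono_components V E \<phi>. card X - 1)"

text \<open>G/S: vertices are the vertex sets of the components of (V,S) (each such set is
  contracted to one vertex); two distinct such vertices are adjacent iff some edge of G
  joins them.\<close>
definition contract_vertices :: "'a set \<Rightarrow> 'a set set \<Rightarrow> 'a set set" where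
  "contract_vertices V S = components S V"

definition contract_edges :: "'a set \<Rightarrow> 'a set set \<Rightarrow> 'a set set \<Rightarrow> 'a set set set" where
  "contract_edges V E S =
     {{X, Y} | X Y. X \<in> contract_vertices V S \<and> Y \<in> contract_vertices V S \<and> X \<noteq> Y \<and>
                    (\<exists>x\<in>X. \<exists>y\<in>Y. {x, y} \<in> E)}"

definition bipartite :: "'b set \<Rightarrow> 'b set set \<Rightarrow> bool" where
  "bipartite V E \<longleftrightarrow> (\<exists>A B. A \<inter> B = {} \<and> A \<union> B = V \<and>
      (\<forall>x y. {x, y} \<in> E \<longrightarrow> \<not> (x \<in> A \<and> y \<in> A) \<and> \<not> (x \<in> B \<and> y \<in> B)))"

end

theory Submission
  imports Defs
begin

text \<open>The cost of a 2-coloring is the number of vertices minus the number of monochromatic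
  components, i.e. the number of edges of a spanning forest of the monochromatic edges.
  Contracting such a forest S collapses every monochromatic component to a single vertex, and
  the coloring descends to a proper 2-coloring of G/S. Conversely, a bipartition of G/S lifts to a
  coloring of G whose monochromatic components are exactly the components of (V, S), so its cost
  is |V| minus the number of components of (V, S), which is at most |S|.\<close>

definition component_of :: "'a set set \<Rightarrow> 'a set \<Rightarrow> 'a \<Rightarrow> 'a set" where
  "component_of F W x = {y. (x, y) \<in> (adj_in F W)\<^sup>*}"

lemma components_eq_image: "components F W = component_of F W ` W"
  by (simp add: components_def component_of_def)

lemma components_cong:
  "(adj_in F' W)\<^sup>* = (adj_in F W)\<^sup>* \<Longrightarrow> components F' W = components F W"
  by (simp add: components_def)

lemma sym_adj_in: "sym (adj_in F W)"
  by (auto intro: symI simp: adj_in_def insert_commute)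

lemma rtrancl_adj_in_sym:
  assumes "(u, v) \<in> (adj_in F W)\<^sup>*"
  shows "(v, u) \<in> (adj_in F W)\<^sup>*"
  using sym_rtrancl[OF sym_adj_in] assms by (rule symD)

lemma rtrancl_adj_in_closed: "(u, v) \<in> (adj_in F W)\<^sup>* \<Longrightarrow> u \<in> W \<Longrightarrow> v \<in> W"
  by (induction rule: rtrancl_induct) (auto simp: adj_in_def)

lemma component_of_subset: "x \<in> W \<Longrightarrow> component_of F W x \<subseteq> W"
  using rtrancl_adj_in_closed by (auto simp: component_of_def)

lemma component_of_self [simp]: "x \<in> component_of F W x"
  by (simp add: component_of_def)

lemma component_of_eqI:
  assumes "y \<in> component_of F W x"
  shows "component_of F W y = component_of F W x"
proof -
  have xy: "(x, y) \<in> (adj_in F W)\<^sup>*" and yx: "(y, x) \<in> (adj_in F W)\<^sup>*"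
    using assms rtrancl_adj_in_sym by (auto simp: component_of_def)
  show ?thesis
    unfolding component_of_def using rtrancl_trans[OF xy] rtrancl_trans[OF yx] by blast
qed

lemma component_of_eq_iff:
  "component_of F W x = component_of F W y \<longleftrightarrow> (x, y) \<in> (adj_in F W)\<^sup>*"
proof
  assume "component_of F W x = component_of F W y"
  then have "y \<in> component_of F W x" by simp
  then show "(x, y) \<in> (adj_in F W)\<^sup>*" by (simp add: component_of_def)
next
  assume "(x, y) \<in> (adj_in F W)\<^sup>*"
  then have "y \<in> component_of F W x" by (simp add: component_of_def)
  then show "component_of F W x = component_of F W y" by (rule component_of_eqI[symmetric])
qed

lemma sum_card_components_minus_one:
  assumes "finite W"
  shows "(\<Sum>X\<in>components F W. card X - 1) = card W - card (components F W)"
proof -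
  let ?C = "components F W"
  have union: "\<Union>?C = W"
    using component_of_subset[of _ W F] component_of_self[of _ F W]
    by (auto simp: components_eq_image)
  have disjoint: "pairwise disjnt ?C"
    unfolding pairwise_def disjnt_def components_eq_image
    using component_of_eqI[of _ F W] by blast
  have finite: "finite X" if "X \<in> ?C" for X
    using that finite_subset[OF component_of_subset assms] by (auto simp: components_eq_image)
  have nonempty: "1 \<le> card X" if X: "X \<in> ?C" for X
  proof -
    obtain x where "X = component_of F W x" using X by (auto simp: components_eq_image)
    then have "x \<in> X" by simp
    then show ?thesis using finite[OF X] by (auto simp: Suc_le_eq card_gt_0_iff)
  qed
  have "(\<Sum>X\<in>?C. card X - 1) = sum card ?C - (\<Sum>X\<in>?C. 1)"
    using nonempty by (rule sum_subtractf_nat)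
  also have "sum card ?C = card W"
    using card_Union_disjoint[OF disjoint finite] union by simp
  finally show ?thesis by simp
qed

lemma card_components_empty: "card (components {} W) = card W"
proof -
  have "components {} W = (\<lambda>x. {x}) ` W"
    by (simp add: components_def adj_in_def)
  then show ?thesis by (simp add: card_image)
qed

lemma adj_in_insert_edge:
  "x \<in> W \<Longrightarrow> y \<in> W \<Longrightarrow> adj_in (insert {x, y} F) W = adj_in F W \<union> {(x, y), (y, x)}"
  by (auto simp: adj_in_def doubleton_eq_iff)

lemma rtrancl_adj_in_insert_edge:
  fixes F :: "'a set set"
  assumes "x \<in> W" "y \<in> W"
  defines "M \<equiv> component_of F W x \<union> component_of F W y"
  shows "(adj_in (insert {x, y} F) W)\<^sup>* = (adj_in F W)\<^sup>* \<union> M \<times> M"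
proof -
  let ?R = "(adj_in F W)\<^sup>*" and ?R' = "(adj_in (insert {x, y} F) W)\<^sup>*"
  have adj: "adj_in (insert {x, y} F) W = adj_in F W \<union> {(x, y), (y, x)}"
    using assms(1,2) by (rule adj_in_insert_edge)
  have M_iff: "a \<in> M \<longleftrightarrow> (x, a) \<in> ?R \<or> (y, a) \<in> ?R" for a
    by (simp add: M_def component_of_def)
  have M_closed: "b \<in> M" if "a \<in> M" "(a, b) \<in> ?R \<or> (b, a) \<in> ?R" for a b
    using that rtrancl_adj_in_sym unfolding M_iff by (metis rtrancl_trans)
  have "?R' \<subseteq> ?R \<union> M \<times> M"
  proof (rule subrelI)
    fix a b assume "(a, b) \<in> ?R'"
    then show "(a, b) \<in> ?R \<union> M \<times> M"
    proof (induction rule: rtrancl_induct)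
      case (step b c)
      have "x \<in> M" "y \<in> M" by (simp_all add: M_iff)
      then have "(b, c) \<in> ?R \<or> b \<in> M \<and> c \<in> M"
        using step.hyps(2) unfolding adj by (blast intro: r_into_rtrancl)
      with step.IH show ?case
      proof (elim UnE disjE conjE SigmaE2)
        assume "(a, b) \<in> ?R" "(b, c) \<in> ?R"
        then show ?case by (simp add: rtrancl_trans)
      next
        assume "(a, b) \<in> ?R" "b \<in> M" "c \<in> M"
        then show ?case using M_closed[of b a] by simp
      next
        assume "a \<in> M" "b \<in> M" "(b, c) \<in> ?R"
        then show ?case using M_closed[of b c] by simp
      qed simp
    qed simp
  qed
  moreover have "?R \<subseteq> ?R'"
    unfolding adj by (rule rtrancl_mono) (rule Un_upper1)
  moreover have "M \<times> M \<subseteq> ?R'"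
  proof clarify
    fix a b assume "a \<in> M" "b \<in> M"
    have xy: "(x, y) \<in> ?R'" and yx: "(y, x) \<in> ?R'"
      unfolding adj by (simp_all add: r_into_rtrancl)
    have to_x: "(u, x) \<in> ?R'" and from_x: "(x, u) \<in> ?R'" if "u \<in> M" for u
    proof -
      from that have "(x, u) \<in> ?R' \<or> (y, u) \<in> ?R'"
        unfolding M_iff using \<open>?R \<subseteq> ?R'\<close> by blast
      then show "(x, u) \<in> ?R'"
        using xy rtrancl_trans by metis
      then show "(u, x) \<in> ?R'"
        by (rule rtrancl_adj_in_sym)
    qed
    show "(a, b) \<in> ?R'"
      using to_x[OF \<open>a \<in> M\<close>] from_x[OF \<open>b \<in> M\<close>] by (rule rtrancl_trans)
  qed
  ultimately show ?thesis by (intro subset_antisym Un_least)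
qed

lemma card_components_insert_edge:
  assumes "finite W" "x \<in> W" "y \<in> W" "(x, y) \<notin> (adj_in F W)\<^sup>*"
  shows "card (components F W) = Suc (card (components (insert {x, y} F) W))"
proof -
  let ?c = "component_of F W"
  define M where "M = ?c x \<union> ?c y"
  have M_cases: "?c u = ?c x \<or> ?c u = ?c y" if "u \<in> M" for u
    using that component_of_eqI[of u F W x] component_of_eqI[of u F W y] unfolding M_def by blast
  have M_closed: "?c u \<subseteq> M" if "u \<in> M" for u
    using M_cases[OF that] unfolding M_def by auto
  have not_M: "?c u \<noteq> ?c x \<and> ?c u \<noteq> ?c y \<and> ?c u \<noteq> M" if "u \<notin> M" for u
  proof -
    have "u \<in> ?c u" by (rule component_of_self)
    with that show ?thesis unfolding M_def by blast
  qed
  have xy_M: "x \<in> W \<inter> M" "y \<in> W \<inter> M"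
    using assms(2,3) unfolding M_def by auto
  have "component_of (insert {x, y} F) W u = ?c u \<union> (if u \<in> M then M else {})" for u
    unfolding component_of_def rtrancl_adj_in_insert_edge[OF assms(2,3)] M_def by auto
  with M_closed have "component_of (insert {x, y} F) W u = (if u \<in> M then M else ?c u)" for u
    by auto
  then have "components (insert {x, y} F) W = (\<lambda>u. if u \<in> M then M else ?c u) ` W"
    by (simp add: components_eq_image)
  also have "\<dots> = insert M (?c ` (W - M))"
    using xy_M by (auto simp: image_iff)
  finally have new: "components (insert {x, y} F) W = insert M (?c ` (W - M))" .
  have "components F W = ?c ` (W \<inter> M) \<union> ?c ` (W - M)"
    by (auto simp: components_eq_image)
  also have "?c ` (W \<inter> M) = {?c x, ?c y}"
    using M_cases xy_M by blast
  finally have old: "components F W = {?c x, ?c y} \<union> ?c ` (W - M)" .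
  have "?c x \<noteq> ?c y"
    using assms(4) by (simp add: component_of_eq_iff)
  moreover have "{?c x, ?c y} \<inter> ?c ` (W - M) = {}" "M \<notin> ?c ` (W - M)"
    using not_M by auto
  ultimately show ?thesis
    unfolding old new using assms(1) by (simp add: card_Un_disjoint)
qed

lemma rtrancl_adj_in_insert_cases:
  "(adj_in (insert e F) W)\<^sup>* = (adj_in F W)\<^sup>* \<or>
   (\<exists>x y. x \<in> W \<and> y \<in> W \<and> e = {x, y} \<and> (x, y) \<notin> (adj_in F W)\<^sup>*)"
proof (cases "\<exists>x y. x \<in> W \<and> y \<in> W \<and> e = {x, y}")
  case False
  then have "adj_in (insert e F) W = adj_in F W" by (auto simp: adj_in_def)
  then show ?thesis by simp
next
  case True
  then obtain x y where xy: "x \<in> W" "y \<in> W" "e = {x, y}" by blast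
  show ?thesis
  proof (cases "(x, y) \<in> (adj_in F W)\<^sup>*")
    case True
    then have same: "component_of F W y = component_of F W x"
      by (simp add: component_of_eq_iff rtrancl_adj_in_sym)
    have "component_of F W x \<times> component_of F W x \<subseteq> (adj_in F W)\<^sup>*"
    proof clarify
      fix a b assume "a \<in> component_of F W x" "b \<in> component_of F W x"
      then have "(a, x) \<in> (adj_in F W)\<^sup>*" "(x, b) \<in> (adj_in F W)\<^sup>*"
        by (simp_all add: component_of_def rtrancl_adj_in_sym)
      then show "(a, b) \<in> (adj_in F W)\<^sup>*" by (rule rtrancl_trans)
    qed
    then show ?thesis
      using rtrancl_adj_in_insert_edge[OF xy(1,2), of F] xy(3) same by auto
  next
    case False
    then show ?thesis using xy by blast
  qed
qed

lemma rtrancl_adj_in_insert_cong: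
  assumes "(adj_in F' W)\<^sup>* = (adj_in F W)\<^sup>*"
  shows "(adj_in (insert e F') W)\<^sup>* = (adj_in (insert e F) W)\<^sup>*"
proof -
  let ?P = "{(u, v). e = {u, v} \<and> u \<in> W \<and> v \<in> W}"
  have adj: "adj_in (insert e G) W = adj_in G W \<union> ?P" for G
    by (auto simp: adj_in_def)
  have "(adj_in (insert e F') W)\<^sup>* = ((adj_in F' W)\<^sup>* \<union> ?P\<^sup>*)\<^sup>*"
    unfolding adj by (rule rtrancl_Un_rtrancl[symmetric])
  also have "\<dots> = (adj_in (insert e F) W)\<^sup>*"
    unfolding adj assms by (rule rtrancl_Un_rtrancl)
  finally show ?thesis .
qed

lemma card_le_card_edges_plus_components:
  assumes "finite F" "finite W"
  shows "card W \<le> card F + card (components F W)"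
  using assms(1)
proof (induction F rule: finite_induct)
  case empty
  then show ?case by (simp add: card_components_empty)
next
  case (insert e F)
  from rtrancl_adj_in_insert_cases[of e F W] show ?case
  proof (elim disjE exE conjE)
    assume "(adj_in (insert e F) W)\<^sup>* = (adj_in F W)\<^sup>*"
    then have "components (insert e F) W = components F W" by (rule components_cong)
    with insert show ?case by simp
  next
    fix x y assume "x \<in> W" "y \<in> W" "e = {x, y}" "(x, y) \<notin> (adj_in F W)\<^sup>*"
    then have "card (components F W) = Suc (card (components (insert e F) W))"
      using card_components_insert_edge[OF assms(2)] by simp
    with insert show ?case by simp
  qed
qed

lemma exists_spanning_forest:
  assumes "finite F" "finite W"
  shows "\<exists>F'\<subseteq>F. (adj_in F' W)\<^sup>* = (adj_in F W)\<^sup>* \<and>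
    card F' + card (components F W) \<le> card W"
  using assms(1)
proof (induction F rule: finite_induct)
  case empty
  then show ?case by (simp add: card_components_empty)
next
  case (insert e F)
  then obtain F' where F': "F' \<subseteq> F" "(adj_in F' W)\<^sup>* = (adj_in F W)\<^sup>*"
    "card F' + card (components F W) \<le> card W" by blast
  from rtrancl_adj_in_insert_cases[of e F W] show ?case
  proof (elim disjE exE conjE)
    assume same: "(adj_in (insert e F) W)\<^sup>* = (adj_in F W)\<^sup>*"
    then have "components (insert e F) W = components F W" by (rule components_cong)
    with F' same show ?case by (intro exI[of _ F']) auto
  next
    fix x y assume xy: "x \<in> W" "y \<in> W" "e = {x, y}" "(x, y) \<notin> (adj_in F W)\<^sup>*"
    then have merged: "card (components F W) = Suc (card (components (insert e F) W))"
      using card_components_insert_edge[OF assms(2)] by simp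
    have "e \<notin> F'"
    proof
      assume "e \<in> F'"
      then have "(x, y) \<in> (adj_in F' W)\<^sup>*" using xy by (auto simp: adj_in_def)
      with F'(2) xy(4) show False by simp
    qed
    moreover have "finite F'" using F'(1) insert(1) by (rule finite_subset)
    ultimately have "card (insert e F') = Suc (card F')" by simp
    then show ?case
      using F' merged rtrancl_adj_in_insert_cong[OF F'(2)] by (intro exI[of _ "insert e F'"]) auto
  qed
qed

definition monochromatic_edges :: "'a set set \<Rightarrow> ('a \<Rightarrow> nat) \<Rightarrow> 'a set set" where
  "monochromatic_edges E \<phi> = {e \<in> E. \<forall>a\<in>e. \<forall>b\<in>e. \<phi> a = \<phi> b}"

lemma adj_in_monochromatic_edges:
  "(u, v) \<in> adj_in (monochromatic_edges E \<phi>) W \<longleftrightarrow> (u, v) \<in> adj_in E W \<and> \<phi> u = \<phi> v"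
  unfolding adj_in_def monochromatic_edges_def mem_Collect_eq case_prod_conv
  by (metis insertCI insertE singletonD)

lemma color_eq_if_in_monochromatic_component:
  assumes "v \<in> component_of (monochromatic_edges E \<phi>) W u"
  shows "\<phi> v = \<phi> u"
proof -
  from assms have "(u, v) \<in> (adj_in (monochromatic_edges E \<phi>) W)\<^sup>*"
    by (simp add: component_of_def)
  then show ?thesis
    by (induction rule: rtrancl_induct) (simp_all add: adj_in_monochromatic_edges)
qed

lemma component_of_color_class:
  assumes "u \<in> V"
  shows "component_of E {v \<in> V. \<phi> v = \<phi> u} u = component_of (monochromatic_edges E \<phi>) V u"
proof -
  let ?W = "{v \<in> V. \<phi> v = \<phi> u}" and ?F = "monochromatic_edges E \<phi>"
  have "adj_in E ?W \<subseteq> adj_in ?F V"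
  proof (rule subrelI)
    fix a b assume "(a, b) \<in> adj_in E ?W"
    then have "(a, b) \<in> adj_in E V" "\<phi> a = \<phi> b" by (auto simp: adj_in_def)
    then show "(a, b) \<in> adj_in ?F V" by (simp add: adj_in_monochromatic_edges)
  qed
  then have "(adj_in E ?W)\<^sup>* \<subseteq> (adj_in ?F V)\<^sup>*" by (rule rtrancl_mono)
  moreover have "(u, v) \<in> (adj_in E ?W)\<^sup>*" if "(u, v) \<in> (adj_in ?F V)\<^sup>*" for v
    using that
  proof (induction rule: rtrancl_induct)
    case (step w v)
    then have "\<phi> w = \<phi> u"
      using color_eq_if_in_monochromatic_component by (simp add: component_of_def)
    moreover from step.hyps(2) have "(w, v) \<in> adj_in E V" "\<phi> w = \<phi> v"
      by (simp_all add: adj_in_monochromatic_edges)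
    ultimately have "(w, v) \<in> adj_in E ?W" by (auto simp: adj_in_def)
    with step.IH show ?case by (rule rtrancl_into_rtrancl)
  qed simp
  ultimately show ?thesis by (auto simp: component_of_def)
qed

lemma mono_components_eq_components:
  assumes "two_coloring V \<phi>"
  shows "mono_components V E \<phi> = components (monochromatic_edges E \<phi>) V"
proof -
  let ?c = "component_of (monochromatic_edges E \<phi>) V"
  have "components E {v \<in> V. \<phi> v = i} = ?c ` {v \<in> V. \<phi> v = i}" for i
    unfolding components_eq_image using component_of_color_class[of _ V E \<phi>]
    by (intro image_cong) auto
  moreover have "{v \<in> V. \<phi> v = 1} \<union> {v \<in> V. \<phi> v = 2} = V"
    using assms by (auto simp: two_coloring_def)
  ultimately show ?thesis
    unfolding mono_components_def components_eq_image by (metis image_Un)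
qed

lemma cost_eq_card_minus_card_components:
  assumes "two_coloring V \<phi>" "finite V"
  shows "cost V E \<phi> = card V - card (components (monochromatic_edges E \<phi>) V)"
  unfolding cost_def mono_components_eq_components[OF assms(1)]
  using assms(2) by (rule sum_card_components_minus_one)

lemma bipartite_contraction_if_same_components:
  assumes "two_coloring V \<phi>" "(adj_in S V)\<^sup>* = (adj_in (monochromatic_edges E \<phi>) V)\<^sup>*"
  shows "bipartite (contract_vertices V S) (contract_edges V E S)"
proof -
  let ?F = "monochromatic_edges E \<phi>"
  let ?c = "component_of ?F V"
  define part where "part i = ?c ` {v \<in> V. \<phi> v = i}" for i
  have vertices: "contract_vertices V S = ?c ` V"
    using components_cong[OF assms(2)] by (simp add: contract_vertices_def components_eq_image)
  have in_part: "x \<in> V \<and> \<phi> x = i \<and> X = ?c x" if "X \<in> part i" "x \<in> X" for X x i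
  proof -
    from that(1) obtain u where u: "u \<in> V" "\<phi> u = i" "X = ?c u"
      unfolding part_def by blast
    with that(2) have "x \<in> ?c u" by simp
    then show ?thesis
      using u component_of_subset[of u V ?F] component_of_eqI[of x ?F V u]
        color_eq_if_in_monochromatic_component[of x E \<phi> V u] by auto
  qed
  have independent: "\<not> (X \<in> part i \<and> Y \<in> part i)"
    if "{X, Y} \<in> contract_edges V E S" for X Y i
  proof
    assume XY: "X \<in> part i \<and> Y \<in> part i"
    from that obtain X0 Y0 where XY0: "{X, Y} = {X0, Y0}" "X0 \<noteq> Y0"
      and "\<exists>x\<in>X0. \<exists>y\<in>Y0. {x, y} \<in> E"
      unfolding contract_edges_def mem_Collect_eq by (elim exE conjE) (rule that)
    then obtain x y where xy: "x \<in> X0" "y \<in> Y0" "{x, y} \<in> E" by blast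
    have "X0 \<in> {X, Y}" "Y0 \<in> {X, Y}" using XY0(1) by auto
    then have "X0 \<in> part i" "Y0 \<in> part i" using XY by auto
    then have x: "x \<in> V" "\<phi> x = i" "X0 = ?c x" and y: "y \<in> V" "\<phi> y = i" "Y0 = ?c y"
      using in_part xy(1,2) by blast+
    from xy(3) x(1) y(1) have "(x, y) \<in> adj_in E V" by (simp add: adj_in_def)
    with x(2) y(2) have "(x, y) \<in> adj_in ?F V" by (simp add: adj_in_monochromatic_edges)
    then have "?c x = ?c y" by (simp add: component_of_eq_iff r_into_rtrancl)
    with x(3) y(3) XY0(2) show False by simp
  qed
  show ?thesis
    unfolding bipartite_def vertices
  proof (intro exI conjI allI impI)
    show "part 1 \<inter> part 2 = {}"
    proof (rule equals0I)
      fix X assume X: "X \<in> part 1 \<inter> part 2"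
      then obtain u where "X = ?c u" unfolding part_def by blast
      then have "u \<in> X" by simp
      with X in_part have "\<phi> u = 1" "\<phi> u = 2" by blast+
      then show False by simp
    qed
    show "part 1 \<union> part 2 = ?c ` V"
      using assms(1) by (auto simp: part_def two_coloring_def)
    fix X Y assume "{X, Y} \<in> contract_edges V E S"
    then show "\<not> (X \<in> part 1 \<and> Y \<in> part 1)" "\<not> (X \<in> part 2 \<and> Y \<in> part 2)"
      by (rule independent)+
  qed
qed

lemma lift_bipartition_of_contraction:
  assumes "S \<subseteq> E" "bipartite (contract_vertices V S) (contract_edges V E S)"
  obtains \<phi> where "two_coloring V \<phi>"
    "(adj_in (monochromatic_edges E \<phi>) V)\<^sup>* = (adj_in S V)\<^sup>*"
proof -
  let ?c = "component_of S V"
  obtain A B where AB: "A \<inter> B = {}" "A \<union> B = ?c ` V"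
    and independent: "\<forall>X Y. {X, Y} \<in> contract_edges V E S \<longrightarrow>
      \<not> (X \<in> A \<and> Y \<in> A) \<and> \<not> (X \<in> B \<and> Y \<in> B)"
    using assms(2) unfolding bipartite_def contract_vertices_def components_eq_image
    by (elim exE conjE) (rule that)
  define \<phi> where "\<phi> v = (if ?c v \<in> A then 1 else 2 :: nat)" for v
  have "two_coloring V \<phi>" by (auto simp: two_coloring_def \<phi>_def)
  have same_component: "?c u = ?c v" if "u \<in> V" "v \<in> V" "{u, v} \<in> E" "\<phi> u = \<phi> v" for u v
  proof (rule ccontr)
    assume "?c u \<noteq> ?c v"
    moreover have "\<exists>x\<in>?c u. \<exists>y\<in>?c v. {x, y} \<in> E"
      using that(3) component_of_self[of u S V] component_of_self[of v S V] by blast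
    ultimately have "{?c u, ?c v} \<in> contract_edges V E S"
      unfolding contract_edges_def contract_vertices_def components_eq_image
      using that(1,2) by blast
    then have "\<not> (?c u \<in> A \<and> ?c v \<in> A) \<and> \<not> (?c u \<in> B \<and> ?c v \<in> B)"
      using independent by blast
    moreover have "?c u \<in> A \<union> B" "?c v \<in> A \<union> B" using AB(2) that(1,2) by auto
    moreover have "?c u \<in> A \<longleftrightarrow> ?c v \<in> A"
      using that(4) by (simp add: \<phi>_def split: if_splits)
    ultimately show False by blast
  qed
  have "adj_in (monochromatic_edges E \<phi>) V \<subseteq> (adj_in S V)\<^sup>*"
  proof (rule subrelI)
    fix u v assume "(u, v) \<in> adj_in (monochromatic_edges E \<phi>) V"
    then have "(u, v) \<in> adj_in E V" "\<phi> u = \<phi> v"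
      by (simp_all add: adj_in_monochromatic_edges)
    then have "u \<in> V" "v \<in> V" "{u, v} \<in> E" "\<phi> u = \<phi> v"
      by (simp_all add: adj_in_def)
    then have "?c u = ?c v" by (rule same_component)
    then show "(u, v) \<in> (adj_in S V)\<^sup>*" by (simp add: component_of_eq_iff)
  qed
  moreover have "adj_in S V \<subseteq> (adj_in (monochromatic_edges E \<phi>) V)\<^sup>*"
  proof (rule subrelI)
    fix u v assume uv: "(u, v) \<in> adj_in S V"
    then have "?c u = ?c v" by (simp add: component_of_eq_iff r_into_rtrancl)
    then have "\<phi> u = \<phi> v" by (simp add: \<phi>_def)
    moreover have "(u, v) \<in> adj_in E V" using uv assms(1) by (auto simp: adj_in_def)
    ultimately have "(u, v) \<in> adj_in (monochromatic_edges E \<phi>) V"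
      by (simp add: adj_in_monochromatic_edges)
    then show "(u, v) \<in> (adj_in (monochromatic_edges E \<phi>) V)\<^sup>*" by simp
  qed
  ultimately have "(adj_in (monochromatic_edges E \<phi>) V)\<^sup>* = (adj_in S V)\<^sup>*"
    by (intro subset_antisym rtrancl_subset_rtrancl)
  with \<open>two_coloring V \<phi>\<close> show ?thesis by (rule that)
qed

lemma finite_edges_if_graph:
  assumes "graph V E"
  shows "finite E"
proof (rule finite_subset)
  show "E \<subseteq> Pow V"
  proof
    fix e assume "e \<in> E"
    then obtain x y where "e = {x, y}" "x \<in> V" "y \<in> V"
      using assms unfolding graph_def by meson
    then show "e \<in> Pow V" by simp
  qed
  show "finite (Pow V)" using assms by (simp add: graph_def)
qed

lemma bipartite_contraction_of_coloring:
  assumes "finite V" "finite E" "two_coloring V \<phi>"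
  shows "\<exists>S\<subseteq>E. card S \<le> cost V E \<phi> \<and> bipartite (contract_vertices V S) (contract_edges V E S)"
proof -
  let ?F = "monochromatic_edges E \<phi>"
  have "finite ?F" using assms(2) by (simp add: monochromatic_edges_def)
  then obtain S where S: "S \<subseteq> ?F" "(adj_in S V)\<^sup>* = (adj_in ?F V)\<^sup>*"
    "card S + card (components ?F V) \<le> card V"
    using exists_spanning_forest[OF \<open>finite ?F\<close> assms(1)] by blast
  have "card S \<le> cost V E \<phi>"
    using S(3) cost_eq_card_minus_card_components[OF assms(3,1)] by simp
  moreover have "S \<subseteq> E" using S(1) by (auto simp: monochromatic_edges_def)
  moreover have "bipartite (contract_vertices V S) (contract_edges V E S)"
    using assms(3) S(2) by (rule bipartite_contraction_if_same_components)
  ultimately show ?thesis by (intro exI[of _ S] conjI)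
qed

lemma coloring_of_bipartite_contraction:
  assumes "finite V" "finite E" "S \<subseteq> E"
    and "bipartite (contract_vertices V S) (contract_edges V E S)"
  shows "\<exists>\<phi>. two_coloring V \<phi> \<and> cost V E \<phi> \<le> card S"
proof -
  obtain \<phi> where \<phi>: "two_coloring V \<phi>" "(adj_in (monochromatic_edges E \<phi>) V)\<^sup>* = (adj_in S V)\<^sup>*"
    using lift_bipartition_of_contraction[OF assms(3,4)] .
  have "finite S" using assms(2,3) by (rule rev_finite_subset)
  have "cost V E \<phi> = card V - card (components S V)"
    using cost_eq_card_minus_card_components[OF \<phi>(1) assms(1)] components_cong[OF \<phi>(2)] by simp
  also have "\<dots> \<le> card S"
    using card_le_card_edges_plus_components[OF \<open>finite S\<close> assms(1)] by simp
  finally have "cost V E \<phi> \<le> card S" .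
  with \<phi>(1) show ?thesis by (intro exI[of _ \<phi>] conjI)
qed

theorem lemma1:
  fixes V :: "'a set" and E :: "'a set set" and k :: nat
  assumes "graph V E"
  shows "(\<exists>\<phi>. two_coloring V \<phi> \<and> cost V E \<phi> \<le> k) \<longleftrightarrow>
         (\<exists>S. S \<subseteq> E \<and> card S \<le> k \<and>
              bipartite (contract_vertices V S) (contract_edges V E S))"
proof -
  have V: "finite V" using assms by (simp add: graph_def)
  have E: "finite E" using assms by (rule finite_edges_if_graph)
  show ?thesis
  proof
    assume "\<exists>\<phi>. two_coloring V \<phi> \<and> cost V E \<phi> \<le> k"
    then obtain \<phi> where \<phi>: "two_coloring V \<phi>" "cost V E \<phi> \<le> k" by blast
    from bipartite_contraction_of_coloring[OF V E \<phi>(1)] obtain S where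
      "S \<subseteq> E" "card S \<le> cost V E \<phi>" "bipartite (contract_vertices V S) (contract_edges V E S)"
      by blast
    with \<phi>(2) show "\<exists>S. S \<subseteq> E \<and> card S \<le> k \<and>
        bipartite (contract_vertices V S) (contract_edges V E S)"
      by (intro exI[of _ S]) simp
  next
    assume "\<exists>S. S \<subseteq> E \<and> card S \<le> k \<and>
        bipartite (contract_vertices V S) (contract_edges V E S)"
    then obtain S where S: "S \<subseteq> E" "card S \<le> k"
      "bipartite (contract_vertices V S) (contract_edges V E S)" by blast
    from coloring_of_bipartite_contraction[OF V E S(1,3)] obtain \<phi> where
      "two_coloring V \<phi>" "cost V E \<phi> \<le> card S"
      by blast
    with S(2) show "\<exists>\<phi>. two_coloring V \<phi> \<and> cost V E \<phi> \<le> k"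
      by (intro exI[of _ \<phi>]) simp
  qed
qed

end
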